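(* Let $D,Q$ be distributions over $[N]$ with $N$ divisible by $6$, let $\varepsilon\in(0,1)$, and define $D'=\frac12D+\frac12U_{[N]}$, $Q'=\frac12Q+\frac12U_{[N]}$, $m=6N$, and $\theta_x=\frac{\lfloor mQ'(x)\rfloor/m}{Q'(x)}$ for $x\in[N]$. Define distributions $D'',Q''$ over $[N+1]$ by $D''(x)=\theta_xD'(x)$, $Q''(x)=\theta_xQ'(x)$ for $x\in[N]$, and $D''(N+1)=1-\sum_{x\in[N]}\theta_xD'(x)$, $Q''(N+1)=1-\sum_{x\in[N]}\theta_xQ'(x)$. Then: $\theta_x\ge 2/3$ for all $x\in[N]$; $Q''$ is $\frac1m$-granular (every probability is an integer multiple of $1/m$) and has full support on $[N]$; $\delta_{TV}(D',Q')=\frac12\delta_{TV}(D,Q)$; if $D=Q$ then $D''=Q''$; and if $\delta_{TV}(D,Q)>\varepsilon$ then $\delta_{TV}(D'',Q'')\ge\varepsilon/3$.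
   Context: $U_{[N]}$ is the uniform distribution over $[N]$; $\delta_{TV}(P,Q)=\frac12\sum_{x}|P(x)-Q(x)|$ denotes total variation distance. *)

theory Defs
  imports Complex_Main
begin

text \<open>A distribution over [N] = {1..N}, represented as a real-valued function on nat
  (values outside {1..N} are irrelevant).\<close>
definition is_dist :: "nat \<Rightarrow> (nat \<Rightarrow> real) \<Rightarrow> bool" where
  "is_dist N P \<longleftrightarrow> (\<forall>x\<in>{1..N}. P x \<ge> 0) \<and> (\<Sum>x=1..N. P x) = 1"

definition tv :: "nat \<Rightarrow> (nat \<Rightarrow> real) \<Rightarrow> (nat \<Rightarrow> real) \<Rightarrow> real" where
  "tv N P Q = (1/2) * (\<Sum>x=1..N. \<bar>P x - Q x\<bar>)"

definition unif :: "nat \<Rightarrow> nat \<Rightarrow> real" where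
  "unif N x = (if x \<in> {1..N} then 1 / real N else 0)"

definition mixU :: "nat \<Rightarrow> (nat \<Rightarrow> real) \<Rightarrow> nat \<Rightarrow> real" where
  "mixU N P x = (if x \<in> {1..N} then P x / 2 + unif N x / 2 else 0)"

definition theta :: "nat \<Rightarrow> (nat \<Rightarrow> real) \<Rightarrow> nat \<Rightarrow> real" where
  "theta N Q' x = (real_of_int \<lfloor>real (6*N) * Q' x\<rfloor> / real (6*N)) / Q' x"

definition rnd :: "nat \<Rightarrow> (nat \<Rightarrow> real) \<Rightarrow> (nat \<Rightarrow> real) \<Rightarrow> nat \<Rightarrow> real" where
  "rnd N Q' P' x =
     (if x \<in> {1..N} then theta N Q' x * P' x
      else if x = N + 1 then 1 - (\<Sum>y=1..N. theta N Q' y * P' y)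
      else 0)"

end

theory Submission
  imports Defs
begin

text \<open>Mixing with the uniform distribution halves every difference \<open>D x - Q x\<close> and lifts
  \<open>6N \<cdot> Q'(x)\<close> to at least 3, so rounding down to a multiple of \<open>1/(6N)\<close> loses at most a
  third of the mass at each point. Hence \<open>\<theta>\<^sub>x \<ge> 2/3\<close>, and since \<open>D''\<close> and \<open>Q''\<close> rescale \<open>D'\<close>
  and \<open>Q'\<close> by the same factor \<open>\<theta>\<^sub>x\<close> on \<open>[N]\<close>, the distance on \<open>[N]\<close> alone is at least
  \<open>2/3 \<cdot> \<delta>(D', Q') = 1/3 \<cdot> \<delta>(D, Q)\<close>.\<close>

lemma floor_divide_self_ge_two_thirds:
  fixes a :: real
  assumes "3 \<le> a"
  shows "2/3 \<le> of_int \<lfloor>a\<rfloor> / a"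
proof -
  have "2/3 * a \<le> of_int \<lfloor>a\<rfloor>" using assms by linarith
  thus ?thesis using assms by (simp add: field_simps)
qed

lemma is_dist_ge_one: "is_dist N P \<Longrightarrow> 1 \<le> N"
  by (cases N) (auto simp: is_dist_def)

text \<open>No positivity is needed: at \<open>P x = 0\<close> both sides vanish, as \<open>theta\<close> divides by zero.\<close>
lemma theta_mult_self:
  "theta N P x * P x = of_int \<lfloor>real (6*N) * P x\<rfloor> / real (6*N)"
  by (cases "P x = 0") (simp_all add: theta_def)

lemma theta_ge_two_thirds:
  assumes "3 \<le> real (6*N) * P x"
  shows "2/3 \<le> theta N P x"
  using floor_divide_self_ge_two_thirds[OF assms] by (simp add: theta_def)

lemma mixU_eq:
  "x \<in> {1..N} \<Longrightarrow> mixU N P x = P x / 2 + 1 / (2 * real N)"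
  by (simp add: mixU_def unif_def)

lemma scaled_mixU_ge_three:
  assumes "is_dist N P" and x: "x \<in> {1..N}"
  shows "3 \<le> real (6*N) * mixU N P x"
proof -
  have "real (6*N) * mixU N P x = 3 * real N * P x + 3"
    using is_dist_ge_one[OF assms(1)] by (simp add: mixU_eq[OF x] field_simps)
  thus ?thesis using assms by (simp add: is_dist_def)
qed

lemma is_dist_mixU:
  assumes "is_dist N P"
  shows "is_dist N (mixU N P)"
proof -
  have "(\<Sum>x=1..N. mixU N P x) = (\<Sum>x=1..N. P x / 2 + 1 / (2 * real N))"
    by (rule sum.cong) (simp_all add: mixU_eq)
  also have "\<dots> = 1"
    using assms is_dist_ge_one[OF assms] by (simp add: is_dist_def sum.distrib sum_divide_distrib[symmetric])
  finally show ?thesis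
    using assms by (simp add: is_dist_def mixU_eq add_nonneg_nonneg)
qed

lemma tv_mixU: "tv N (mixU N D) (mixU N Q) = tv N D Q / 2"
proof -
  have "(\<Sum>x=1..N. \<bar>mixU N D x - mixU N Q x\<bar>) = (\<Sum>x=1..N. \<bar>D x - Q x\<bar> / 2)"
    by (rule sum.cong) (auto simp: mixU_eq abs_if)
  thus ?thesis by (simp add: tv_def sum_divide_distrib)
qed

lemma rnd_self_eq:
  "x \<in> {1..N} \<Longrightarrow> rnd N P P x = of_int \<lfloor>real (6*N) * P x\<rfloor> / real (6*N)"
  by (simp add: rnd_def theta_mult_self)

lemma rnd_self_pos:
  assumes "x \<in> {1..N}" and "1 \<le> real (6*N) * P x"
  shows "0 < rnd N P P x"
  using assms by (simp add: rnd_self_eq)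

lemma rnd_self_granular:
  assumes P: "is_dist N P" and x: "x \<in> {1..N+1}"
  shows "\<exists>k::nat. rnd N P P x = real k / real (6*N)"
proof (cases "x \<in> {1..N}")
  case True
  have "0 \<le> \<lfloor>real (6*N) * P x\<rfloor>" using P True by (simp add: is_dist_def)
  hence "rnd N P P x = real (nat \<lfloor>real (6*N) * P x\<rfloor>) / real (6*N)"
    by (simp add: rnd_self_eq[OF True])
  thus ?thesis by blast
next
  case False
  define m where "m = real (6*N)"
  define s where "s = (\<Sum>y=1..N. \<lfloor>m * P y\<rfloor>)"
  have "of_int s \<le> (\<Sum>y=1..N. m * P y)"
    unfolding s_def of_int_sum by (rule sum_mono) simp
  also have "\<dots> = m" using P by (simp add: is_dist_def sum_distrib_left[symmetric])
  finally have s_le: "of_int s \<le> m" .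
  have "m > 0" using is_dist_ge_one[OF P] by (simp add: m_def)
  have "rnd N P P x = 1 - of_int s / m"
    using False x by (simp add: rnd_def theta_mult_self s_def m_def sum_divide_distrib)
  also have "\<dots> = (m - of_int s) / m"
    using \<open>m > 0\<close> by (simp add: field_simps)
  also have "m - of_int s = real (nat (int (6*N) - s))"
    using s_le by (simp add: m_def)
  finally show ?thesis by (auto simp: m_def)
qed

lemma rnd_cong:
  "(\<And>x. x \<in> {1..N} \<Longrightarrow> P x = P' x) \<Longrightarrow> rnd N Q P y = rnd N Q P' y"
proof -
  assume "\<And>x. x \<in> {1..N} \<Longrightarrow> P x = P' x"
  moreover from this have "(\<Sum>x=1..N. theta N Q x * P x) = (\<Sum>x=1..N. theta N Q x * P' x)"
    by (intro sum.cong) auto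
  ultimately show ?thesis by (simp add: rnd_def)
qed

lemma tv_rnd_ge:
  assumes c: "0 \<le> c" "\<And>x. x \<in> {1..N} \<Longrightarrow> c \<le> theta N Q x"
  shows "c * tv N P P' \<le> tv (N+1) (rnd N Q P) (rnd N Q P')"
proof -
  have "(\<Sum>x=1..N. c * \<bar>P x - P' x\<bar>) \<le> (\<Sum>x=1..N. \<bar>rnd N Q P x - rnd N Q P' x\<bar>)"
  proof (rule sum_mono)
    fix x assume x: "x \<in> {1..N}"
    have "\<bar>rnd N Q P x - rnd N Q P' x\<bar> = theta N Q x * \<bar>P x - P' x\<bar>"
      using x c(1) c(2)[OF x] by (simp add: rnd_def abs_mult right_diff_distrib[symmetric])
    thus "c * \<bar>P x - P' x\<bar> \<le> \<bar>rnd N Q P x - rnd N Q P' x\<bar>"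
      using mult_right_mono[OF c(2)[OF x] abs_ge_zero] by simp
  qed
  also have "\<dots> \<le> (\<Sum>x=1..N+1. \<bar>rnd N Q P x - rnd N Q P' x\<bar>)" by simp
  finally show ?thesis by (simp add: tv_def sum_distrib_left[symmetric])
qed

theorem mainTheorem5:
  fixes N :: nat and D Q :: "nat \<Rightarrow> real" and \<epsilon> :: real
  assumes "6 dvd N"
    and "is_dist N D" and "is_dist N Q"
    and "0 < \<epsilon>" and "\<epsilon> < 1"
  defines "D' \<equiv> mixU N D" and "Q' \<equiv> mixU N Q" and "m \<equiv> 6 * N"
  defines "D'' \<equiv> rnd N Q' D'" and "Q'' \<equiv> rnd N Q' Q'"
  shows "(\<forall>x\<in>{1..N}. theta N Q' x \<ge> 2/3)
    \<and> (\<forall>x\<in>{1..N+1}. \<exists>k::nat. Q'' x = real k / real m)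
    \<and> (\<forall>x\<in>{1..N}. Q'' x > 0)
    \<and> tv N D' Q' = tv N D Q / 2
    \<and> ((\<forall>x\<in>{1..N}. D x = Q x) \<longrightarrow> (\<forall>x\<in>{1..N+1}. D'' x = Q'' x))
    \<and> (tv N D Q > \<epsilon> \<longrightarrow> tv (N+1) D'' Q'' \<ge> \<epsilon> / 3)"
proof -
  have Q'_ge: "\<And>x. x \<in> {1..N} \<Longrightarrow> 3 \<le> real (6*N) * Q' x"
    using scaled_mixU_ge_three[OF assms(3)] by (simp add: Q'_def)
  hence theta_ge: "\<forall>x\<in>{1..N}. 2/3 \<le> theta N Q' x"
    using theta_ge_two_thirds by blast
  have tv_mix: "tv N D' Q' = tv N D Q / 2"
    by (simp add: D'_def Q'_def tv_mixU)
  have "2/3 * tv N D' Q' \<le> tv (N+1) D'' Q''"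
    unfolding D''_def Q''_def using theta_ge by (intro tv_rnd_ge) auto
  moreover have "\<forall>x\<in>{1..N+1}. \<exists>k::nat. Q'' x = real k / real m"
    using rnd_self_granular[OF is_dist_mixU[OF assms(3)]] by (simp add: Q''_def Q'_def m_def)
  moreover have "\<forall>x\<in>{1..N}. Q'' x > 0"
    using Q'_ge rnd_self_pos[of _ N Q'] by (force simp: Q''_def)
  moreover have "(\<forall>x\<in>{1..N}. D x = Q x) \<longrightarrow> (\<forall>y\<in>{1..N+1}. D'' y = Q'' y)"
    by (auto simp: D''_def Q''_def D'_def Q'_def mixU_def intro: rnd_cong)
  ultimately show ?thesis using theta_ge tv_mix by auto
qed

end
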